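(* Let $U\subset\mathbb{C}$ be connected and simply connected, let $a,\mu:U\to\mathbb{C}$ be holomorphic with $\mu\neq0$ and $|a|\neq1$ on $U$, and let $F(\theta;w)$ be the associated $\theta$-family. The following are equivalent: (1) there exists $\theta_0\in\mathbb{R}$ such that $K(F(\theta_0;w))=0$ for every $w\in U$; (2) the map $a(w)$ is constant on $U$; (3) for every $\theta$, the normal maps $L_3(a)$ and $L_0(ae^{i\theta})$ are constant maps from $U$ into the light cone $\mathcal{C}$; (4) for all $\theta\in\mathbb{R}$, the set of planar points of $F(\theta;U)$ is all of $U$.
   Context: $\mathbb{R}^4_1$ has Lorentz product $-x^0y^0+x^1y^1+x^2y^2+x^3y^3$; $\mathcal{C}$ is its light cone of nonzero null vectors. With $W(a,b)=(a+b,1+ab,i(1-ab),a-b)$, the $\theta$-family is $F(\theta;w)=P+2\operatorname{Re}\int_{w_0}^{w}\mu(\xi)W(a(\xi),e^{i\theta}a(\xi))\,d\xi$, and $K(F(\theta;w))$ denotes the Gauss curvature of $F(\theta;\cdot)$ at $w$; a planar point is one where this curvature vanishes. The lightlike normal maps are $L_3(a)=(1+a\bar a,\;a+\bar a,\;-i(a-\bar a),\;-1+a\bar a)$ and $L_0(e^{i\theta}a)=(1+a\bar a,\;ae^{i\theta}+\bar ae^{-i\theta},\;-i(ae^{i\theta}-\bar ae^{-i\theta}),\;1-a\bar a)$. *)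

theory Defs
  imports "HOL-Analysis.Analysis"
begin

text \<open>Vectors of R^4 (and C^4) are represented as functions on nat, with
components 0,1,2,3 (all other components are 0).\<close>

definition vec4 :: "'a::zero \<Rightarrow> 'a \<Rightarrow> 'a \<Rightarrow> 'a \<Rightarrow> nat \<Rightarrow> 'a" where
  "vec4 c0 c1 c2 c3 = (\<lambda>k. if k = 0 then c0 else if k = 1 then c1
      else if k = 2 then c2 else if k = 3 then c3 else 0)"

definition lor :: "(nat \<Rightarrow> real) \<Rightarrow> (nat \<Rightarrow> real) \<Rightarrow> real" where
  "lor x y = - x 0 * y 0 + x 1 * y 1 + x 2 * y 2 + x 3 * y 3"

definition light_cone :: "(nat \<Rightarrow> real) set" where
  "light_cone = {x. (\<forall>k\<ge>4. x k = 0) \<and> (\<exists>k<4. x k \<noteq> 0) \<and> lor x x = 0}"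

definition Wv :: "complex \<Rightarrow> complex \<Rightarrow> nat \<Rightarrow> complex" where
  "Wv a b = vec4 (a + b) (1 + a * b) (\<i> * (1 - a * b)) (a - b)"

text \<open>Component k of the holomorphic primitive of mu W(a, e^{i theta} a) on U,
  normalised to vanish at w0 (and set to 0 outside U so that it is unique).\<close>
definition prim :: "complex set \<Rightarrow> complex \<Rightarrow> (complex \<Rightarrow> complex) \<Rightarrow> (complex \<Rightarrow> complex)
     \<Rightarrow> real \<Rightarrow> nat \<Rightarrow> complex \<Rightarrow> complex" where
  "prim U w0 a \<mu> \<theta> k = (THE \<Psi>. (\<forall>w\<in>U. (\<Psi> has_field_derivative
        (\<mu> w * Wv (a w) (exp (\<i> * of_real \<theta>) * a w) k)) (at w))
      \<and> \<Psi> w0 = 0 \<and> (\<forall>w. w \<notin> U \<longrightarrow> \<Psi> w = 0))"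

definition theta_family :: "complex set \<Rightarrow> complex \<Rightarrow> (nat \<Rightarrow> real) \<Rightarrow> (complex \<Rightarrow> complex)
     \<Rightarrow> (complex \<Rightarrow> complex) \<Rightarrow> real \<Rightarrow> complex \<Rightarrow> nat \<Rightarrow> real" where
  "theta_family U w0 P a \<mu> \<theta> w =
     (\<lambda>k. if k < 4 then P k + 2 * Re (prim U w0 a \<mu> \<theta> k w) else 0)"

definition dx :: "(complex \<Rightarrow> real) \<Rightarrow> complex \<Rightarrow> real" where
  "dx g w = deriv (\<lambda>t. g (w + of_real t)) 0"
definition dy :: "(complex \<Rightarrow> real) \<Rightarrow> complex \<Rightarrow> real" where
  "dy g w = deriv (\<lambda>t. g (w + \<i> * of_real t)) 0"

definition dxv :: "(complex \<Rightarrow> nat \<Rightarrow> real) \<Rightarrow> complex \<Rightarrow> nat \<Rightarrow> real" where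
  "dxv f w = (\<lambda>k. dx (\<lambda>z. f z k) w)"
definition dyv :: "(complex \<Rightarrow> nat \<Rightarrow> real) \<Rightarrow> complex \<Rightarrow> nat \<Rightarrow> real" where
  "dyv f w = (\<lambda>k. dy (\<lambda>z. f z k) w)"

text \<open>Gauss curvature of the induced metric (first fundamental form w.r.t. the
  Lorentz product), via Brioschi's formula.\<close>
definition gauss_curvature :: "(complex \<Rightarrow> nat \<Rightarrow> real) \<Rightarrow> complex \<Rightarrow> real" where
  "gauss_curvature f w =
    (let E = (\<lambda>z. lor (dxv f z) (dxv f z));
         F = (\<lambda>z. lor (dxv f z) (dyv f z));
         G = (\<lambda>z. lor (dyv f z) (dyv f z));
         e = E w; ff = F w; g = G w;
         Eu = dx E w; Ev = dy E w; Fu = dx F w; Fv = dy F w; Gu = dx G w; Gv = dy G w;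
         Evv = dy (dy E) w; Fuv = dy (dx F) w; Guu = dx (dx G) w;
         det3 = (\<lambda>a11 a12 a13 a21 a22 a23 a31 a32 a33::real.
                   a11 * (a22 * a33 - a23 * a32) - a12 * (a21 * a33 - a23 * a31)
                   + a13 * (a21 * a32 - a22 * a31))
     in (det3 (- Evv / 2 + Fuv - Guu / 2) (Eu / 2) (Fu - Ev / 2)
              (Fv - Gu / 2) e ff
              (Gv / 2) ff g
         - det3 0 (Ev / 2) (Gu / 2)
              (Ev / 2) e ff
              (Gu / 2) ff g) / (e * g - ff ^ 2) ^ 2)"

definition planar_points :: "(complex \<Rightarrow> nat \<Rightarrow> real) \<Rightarrow> complex set \<Rightarrow> complex set" where
  "planar_points f U = {w \<in> U. gauss_curvature f w = 0}"

text \<open>Lightlike normal maps (the given complex expressions are real).\<close>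
definition L3 :: "complex \<Rightarrow> nat \<Rightarrow> real" where
  "L3 a = vec4 (Re (1 + a * cnj a)) (Re (a + cnj a)) (Re (- \<i> * (a - cnj a))) (Re (-1 + a * cnj a))"

definition L0 :: "complex \<Rightarrow> nat \<Rightarrow> real" where
  "L0 b = vec4 (Re (1 + b * cnj b)) (Re (b + cnj b)) (Re (- \<i> * (b - cnj b))) (Re (1 - b * cnj b))"

end

theory Submission
  imports Defs "HOL-Complex_Analysis.Complex_Analysis" "HOL-Computational_Algebra.Polynomial"
begin

text \<open>The vector W(a,b) is null for the complex-bilinear extension of the Lorentz
  product, so the real and imaginary parts of the derivative of F(theta;.) are orthogonal
  and of equal length: F(theta;.) is conformal with factor
  Lambda = 4 |mu|^2 |1 - e^(i theta) |a|^2|^2, which vanishes nowhere because mu is nonzero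
  and |a| is not 1.  Then K = - Delta log Lambda / (2 Lambda), and since log |mu|^2 is harmonic,
  K = - |a'|^2 (2 |a|^2 - cos theta (1 + |a|^4)) / (|mu|^2 |1 - e^(i theta) |a|^2|^6).
  So K vanishes at a point iff a' = 0 there or |a| is a root of a fixed nonzero polynomial.
  By the open mapping theorem |a| takes infinitely many values near a point where a' is
  nonzero, hence K = 0 everywhere forces a to be constant.  The normal maps are handled by
  the injectivity of L3.\<close>

lemma has_vector_derivative_horizontal:
  assumes "(g has_field_derivative g') (at z)"
  shows "((\<lambda>t::real. g (z + of_real t)) has_vector_derivative g') (at 0)"
proof -
  have "((\<lambda>x. z + x) has_field_derivative 1) (at 0)"
    by (auto intro!: derivative_eq_intros)
  from DERIV_chain2[OF _ this, of g g'] assms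
  have "((\<lambda>x. g (z + x)) has_field_derivative g') (at (of_real 0))"
    by simp
  then show ?thesis
    using has_vector_derivative_real_field by fastforce
qed

lemma has_vector_derivative_vertical:
  assumes "(g has_field_derivative g') (at z)"
  shows "((\<lambda>t::real. g (z + \<i> * of_real t)) has_vector_derivative (\<i> * g')) (at 0)"
proof -
  have "((\<lambda>x. z + \<i> * x) has_field_derivative \<i>) (at 0)"
    by (auto intro!: derivative_eq_intros)
  from DERIV_chain2[OF _ this, of g g'] assms
  have "((\<lambda>x. g (z + \<i> * x)) has_field_derivative g' * \<i>) (at (of_real 0))"
    by simp
  then show ?thesis
    using has_vector_derivative_real_field by (fastforce simp: mult.commute)
qed

lemma DERIV_Re_horizontal:
  "(g has_field_derivative g') (at z) \<Longrightarrow> D = Re g' \<Longrightarrow>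
   ((\<lambda>t. Re (g (z + of_real t))) has_real_derivative D) (at 0)"
  using has_field_derivative_Re has_vector_derivative_horizontal by blast

lemma DERIV_Im_horizontal:
  "(g has_field_derivative g') (at z) \<Longrightarrow> D = Im g' \<Longrightarrow>
   ((\<lambda>t. Im (g (z + of_real t))) has_real_derivative D) (at 0)"
  using has_field_derivative_Im has_vector_derivative_horizontal by blast

lemma DERIV_Re_vertical:
  "(g has_field_derivative g') (at z) \<Longrightarrow> D = - Im g' \<Longrightarrow>
   ((\<lambda>t. Re (g (z + \<i> * of_real t))) has_real_derivative D) (at 0)"
  using has_field_derivative_Re[OF has_vector_derivative_vertical] by fastforce

lemma DERIV_Im_vertical:
  "(g has_field_derivative g') (at z) \<Longrightarrow> D = Re g' \<Longrightarrow>
   ((\<lambda>t. Im (g (z + \<i> * of_real t))) has_real_derivative D) (at 0)"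
  using has_field_derivative_Im[OF has_vector_derivative_vertical] by fastforce

lemma eventually_line_in_open:
  assumes "open (U::complex set)" "z \<in> U"
  shows "eventually (\<lambda>t::real. z + v * of_real t \<in> U) (nhds 0)"
proof -
  have "open ((\<lambda>t::real. z + v * of_real t) -` U)"
    by (rule open_vimage[OF assms(1)]) (intro continuous_intros)
  from eventually_nhds_in_open[OF this] assms show ?thesis
    by simp
qed

lemma dx_cong_open:
  "open U \<Longrightarrow> z \<in> U \<Longrightarrow> (\<And>x. x \<in> U \<Longrightarrow> h1 x = h2 x) \<Longrightarrow> dx h1 z = dx h2 z"
  unfolding dx_def
  by (rule deriv_cong_ev) (auto elim: eventually_mono[OF eventually_line_in_open[where v = 1]])

lemma dy_cong_open:
  "open U \<Longrightarrow> z \<in> U \<Longrightarrow> (\<And>x. x \<in> U \<Longrightarrow> h1 x = h2 x) \<Longrightarrow> dy h1 z = dy h2 z"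
  unfolding dy_def
  by (rule deriv_cong_ev) (auto elim: eventually_mono[OF eventually_line_in_open[where v = \<i>]])

lemma DERIV_imp_dx: "((\<lambda>t. h (z + of_real t)) has_real_derivative D) (at 0) \<Longrightarrow> dx h z = D"
  unfolding dx_def by (rule DERIV_imp_deriv)

lemma DERIV_imp_dy: "((\<lambda>t. h (z + \<i> * of_real t)) has_real_derivative D) (at 0) \<Longrightarrow> dy h z = D"
  unfolding dy_def by (rule DERIV_imp_deriv)

lemma gauss_curvature_conformal:
  fixes f :: "complex \<Rightarrow> nat \<Rightarrow> real" and \<Lambda> \<Lambda>x \<Lambda>y :: "complex \<Rightarrow> real"
  assumes U: "open U" "w \<in> U"
    and E: "\<And>z. z \<in> U \<Longrightarrow> lor (dxv f z) (dxv f z) = \<Lambda> z"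
    and G: "\<And>z. z \<in> U \<Longrightarrow> lor (dyv f z) (dyv f z) = \<Lambda> z"
    and F: "\<And>z. z \<in> U \<Longrightarrow> lor (dxv f z) (dyv f z) = 0"
    and \<Lambda>x: "\<And>z. z \<in> U \<Longrightarrow> ((\<lambda>t. \<Lambda> (z + of_real t)) has_real_derivative \<Lambda>x z) (at 0)"
    and \<Lambda>y: "\<And>z. z \<in> U \<Longrightarrow> ((\<lambda>t. \<Lambda> (z + \<i> * of_real t)) has_real_derivative \<Lambda>y z) (at 0)"
    and \<Lambda>xx: "((\<lambda>t. \<Lambda>x (w + of_real t)) has_real_derivative \<Lambda>xx) (at 0)"
    and \<Lambda>yy: "((\<lambda>t. \<Lambda>y (w + \<i> * of_real t)) has_real_derivative \<Lambda>yy) (at 0)"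
  shows "gauss_curvature f w
     = - (\<Lambda> w * (\<Lambda>xx + \<Lambda>yy) - (\<Lambda>x w)\<^sup>2 - (\<Lambda>y w)\<^sup>2) / (2 * (\<Lambda> w) ^ 3)"
proof -
  let ?E = "\<lambda>z. lor (dxv f z) (dxv f z)"
  let ?F = "\<lambda>z. lor (dxv f z) (dyv f z)"
  let ?G = "\<lambda>z. lor (dyv f z) (dyv f z)"
  have Ex: "dx ?E z = \<Lambda>x z" and Gx: "dx ?G z = \<Lambda>x z"
    and Ey: "dy ?E z = \<Lambda>y z" and Gy: "dy ?G z = \<Lambda>y z" if "z \<in> U" for z
    using dx_cong_open[OF U(1) that E] dx_cong_open[OF U(1) that G]
      dy_cong_open[OF U(1) that E] dy_cong_open[OF U(1) that G]
      DERIV_imp_dx[OF \<Lambda>x[OF that]] DERIV_imp_dy[OF \<Lambda>y[OF that]]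
    by simp_all
  have Fx: "dx ?F z = 0" and Fy: "dy ?F z = 0" if "z \<in> U" for z
    using dx_cong_open[OF U(1) that F] dy_cong_open[OF U(1) that F]
    by (simp_all add: dx_def dy_def)
  have Eyy: "dy (dy ?E) w = \<Lambda>yy"
    using dy_cong_open[OF U Ey] DERIV_imp_dy[OF \<Lambda>yy] by simp
  have Gxx: "dx (dx ?G) w = \<Lambda>xx"
    using dx_cong_open[OF U Gx] DERIV_imp_dx[OF \<Lambda>xx] by simp
  have Fxy: "dy (dx ?F) w = 0"
    using dy_cong_open[OF U Fx] by (simp add: dy_def)
  have "gauss_curvature f w
      = - (\<Lambda> w / 2) * (\<Lambda> w * (\<Lambda>xx + \<Lambda>yy) - (\<Lambda>x w)\<^sup>2 - (\<Lambda>y w)\<^sup>2) / ((\<Lambda> w)\<^sup>2)\<^sup>2"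
    unfolding gauss_curvature_def Let_def
    unfolding E[OF U(2)] G[OF U(2)] F[OF U(2)] Ex[OF U(2)] Ey[OF U(2)] Gx[OF U(2)] Gy[OF U(2)]
      Fx[OF U(2)] Fy[OF U(2)] Eyy Gxx Fxy
    by (simp add: power2_eq_square algebra_simps divide_simps)
  also have "\<dots> = - (\<Lambda> w * (\<Lambda>xx + \<Lambda>yy) - (\<Lambda>x w)\<^sup>2 - (\<Lambda>y w)\<^sup>2) / (2 * (\<Lambda> w) ^ 3)"
    by (cases "\<Lambda> w = 0") (simp_all add: field_simps power2_eq_square power3_eq_cube)
  finally show ?thesis .
qed

lemma ex1_normalized_primitive:
  assumes U: "open U" "simply_connected U" "w0 \<in> U" and h\<phi>: "\<phi> holomorphic_on U"
  shows "\<exists>!\<Psi>. (\<forall>w\<in>U. (\<Psi> has_field_derivative \<phi> w) (at w)) \<and> \<Psi> w0 = 0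
              \<and> (\<forall>w. w \<notin> U \<longrightarrow> \<Psi> w = 0)"
    (is "\<exists>!\<Psi>. ?prim \<Psi>")
proof -
  obtain h where h: "\<And>z. z \<in> U \<Longrightarrow> (h has_field_derivative \<phi> z) (at z)"
    using U(2) h\<phi> simply_connected_eq_global_primitive[OF U(1)] by blast
  define \<Psi> where "\<Psi> = (\<lambda>w. if w \<in> U then h w - h w0 else 0)"
  have \<Psi>: "?prim \<Psi>"
  proof (intro conjI ballI allI impI)
    fix w assume "w \<in> U"
    have "((\<lambda>w. h w - h w0) has_field_derivative \<phi> w) (at w)"
      using h[OF \<open>w \<in> U\<close>] by (auto intro!: derivative_eq_intros)
    then show "(\<Psi> has_field_derivative \<phi> w) (at w)"
      by (rule has_field_derivative_transform_within_open[OF _ U(1) \<open>w \<in> U\<close>]) (simp add: \<Psi>_def)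
  qed (simp_all add: \<Psi>_def U)
  have "\<Psi>' = \<Psi>" if \<Psi>': "?prim \<Psi>'" for \<Psi>'
  proof -
    have "(\<lambda>w. \<Psi>' w - \<Psi> w) constant_on U"
    proof (rule has_field_derivative_0_imp_constant_on)
      fix z assume "z \<in> U"
      with \<Psi>' \<Psi> have "(\<Psi>' has_field_derivative \<phi> z) (at z)" "(\<Psi> has_field_derivative \<phi> z) (at z)"
        by auto
      from DERIV_diff[OF this] show "((\<lambda>w. \<Psi>' w - \<Psi> w) has_field_derivative 0) (at z)"
        by simp
    qed (use U simply_connected_imp_connected in auto)
    then obtain c where c: "\<And>w. w \<in> U \<Longrightarrow> \<Psi>' w - \<Psi> w = c"
      by (auto simp: constant_on_def)
    with U(3) \<Psi>' \<Psi> have "c = 0"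
      by force
    with c \<Psi>' \<Psi> show "\<Psi>' = \<Psi>"
      by (metis eq_iff_diff_eq_0 ext)
  qed
  with \<Psi> show ?thesis
    by blast
qed

lemma holomorphic_on_Wv: "a holomorphic_on U \<Longrightarrow> (\<lambda>w. Wv (a w) (c * a w) k) holomorphic_on U"
  unfolding Wv_def vec4_def
  by (cases "k = 0"; cases "k = 1"; cases "k = 2"; cases "k = 3") (auto intro!: holomorphic_intros)

lemma prim_has_field_derivative:
  assumes U: "open U" "simply_connected U" "w0 \<in> U" "w \<in> U"
    and "a holomorphic_on U" "\<mu> holomorphic_on U"
  shows "(prim U w0 a \<mu> \<theta> k has_field_derivative (\<mu> w * Wv (a w) (exp (\<i> * of_real \<theta>) * a w) k)) (at w)"
proof -
  have "(\<lambda>w. \<mu> w * Wv (a w) (exp (\<i> * of_real \<theta>) * a w) k) holomorphic_on U"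
    by (intro holomorphic_intros holomorphic_on_Wv assms)
  from theI'[OF ex1_normalized_primitive[OF U(1-3) this]] U(4) show ?thesis
    unfolding prim_def by blast
qed

definition sqnorm :: "(complex \<Rightarrow> complex) \<Rightarrow> complex \<Rightarrow> real" where
  "sqnorm g z = (Re (g z))\<^sup>2 + (Im (g z))\<^sup>2"

definition sqnorm_dx :: "(complex \<Rightarrow> complex) \<Rightarrow> complex \<Rightarrow> real" where
  "sqnorm_dx g z = 2 * (Re (g z) * Re (deriv g z) + Im (g z) * Im (deriv g z))"

definition sqnorm_dy :: "(complex \<Rightarrow> complex) \<Rightarrow> complex \<Rightarrow> real" where
  "sqnorm_dy g z = 2 * (Im (g z) * Re (deriv g z) - Re (g z) * Im (deriv g z))"

definition sqnorm_dxx :: "(complex \<Rightarrow> complex) \<Rightarrow> complex \<Rightarrow> real" where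
  "sqnorm_dxx g z = 2 * ((Re (deriv g z))\<^sup>2 + (Im (deriv g z))\<^sup>2
      + Re (g z) * Re (deriv (deriv g) z) + Im (g z) * Im (deriv (deriv g) z))"

definition sqnorm_dyy :: "(complex \<Rightarrow> complex) \<Rightarrow> complex \<Rightarrow> real" where
  "sqnorm_dyy g z = 2 * ((Re (deriv g z))\<^sup>2 + (Im (deriv g z))\<^sup>2
      - Re (g z) * Re (deriv (deriv g) z) - Im (g z) * Im (deriv (deriv g) z))"

lemma sqnorm_eq_cmod_power2: "sqnorm g z = (cmod (g z))\<^sup>2"
  by (simp add: sqnorm_def cmod_power2)

lemma sqnorm_laplacian: "sqnorm_dxx g z + sqnorm_dyy g z = 4 * sqnorm (deriv g) z"
  unfolding sqnorm_dxx_def sqnorm_dyy_def sqnorm_def by simp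

lemma sqnorm_gradient: "(sqnorm_dx g z)\<^sup>2 + (sqnorm_dy g z)\<^sup>2 = 4 * sqnorm g z * sqnorm (deriv g) z"
  unfolding sqnorm_dx_def sqnorm_dy_def sqnorm_def by (simp add: algebra_simps power2_eq_square)

context
  fixes g :: "complex \<Rightarrow> complex" and U :: "complex set" and z :: complex
  assumes hg: "g holomorphic_on U" and oU: "open U" and zU: "z \<in> U"
begin

lemma DERIV_sqnorm_horizontal:
  "((\<lambda>t. sqnorm g (z + of_real t)) has_real_derivative sqnorm_dx g z) (at 0)"
proof -
  note g' = holomorphic_derivI[OF hg oU zU, where T = UNIV]
  show ?thesis
    unfolding sqnorm_def sqnorm_dx_def
    by (rule DERIV_Re_horizontal[OF g'] DERIV_Im_horizontal[OF g'] derivative_eq_intros refl | simp)+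
qed

lemma DERIV_sqnorm_vertical:
  "((\<lambda>t. sqnorm g (z + \<i> * of_real t)) has_real_derivative sqnorm_dy g z) (at 0)"
proof -
  note g' = holomorphic_derivI[OF hg oU zU, where T = UNIV]
  show ?thesis
    unfolding sqnorm_def sqnorm_dy_def
    by (rule DERIV_Re_vertical[OF g'] DERIV_Im_vertical[OF g'] derivative_eq_intros refl | simp)+
qed

lemma DERIV_sqnorm_dx_horizontal:
  "((\<lambda>t. sqnorm_dx g (z + of_real t)) has_real_derivative sqnorm_dxx g z) (at 0)"
proof -
  note g' = holomorphic_derivI[OF hg oU zU, where T = UNIV]
  note g'' = holomorphic_derivI[OF holomorphic_deriv[OF hg oU] oU zU, where T = UNIV]
  show ?thesis
    unfolding sqnorm_dxx_def sqnorm_dx_def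
    by (rule DERIV_Re_horizontal[OF g'] DERIV_Im_horizontal[OF g'] DERIV_Re_horizontal[OF g'']
          DERIV_Im_horizontal[OF g''] derivative_eq_intros refl | simp)+
       (simp add: algebra_simps power2_eq_square)
qed

lemma DERIV_sqnorm_dy_vertical:
  "((\<lambda>t. sqnorm_dy g (z + \<i> * of_real t)) has_real_derivative sqnorm_dyy g z) (at 0)"
proof -
  note g' = holomorphic_derivI[OF hg oU zU, where T = UNIV]
  note g'' = holomorphic_derivI[OF holomorphic_deriv[OF hg oU] oU zU, where T = UNIV]
  show ?thesis
    unfolding sqnorm_dyy_def sqnorm_dy_def
    by (rule DERIV_Re_vertical[OF g'] DERIV_Im_vertical[OF g'] DERIV_Re_vertical[OF g'']
          DERIV_Im_vertical[OF g''] derivative_eq_intros refl | simp)+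
       (simp add: algebra_simps power2_eq_square)
qed

end

lemma dxv_theta_family:
  assumes "open U" "simply_connected U" "w0 \<in> U" "z \<in> U"
    and "a holomorphic_on U" "\<mu> holomorphic_on U"
  shows "dxv (theta_family U w0 P a \<mu> \<theta>) z
    = (\<lambda>k. if k < 4 then 2 * Re (\<mu> z * Wv (a z) (exp (\<i> * of_real \<theta>) * a z) k) else 0)"
proof
  fix k
  note prim' = prim_has_field_derivative[OF assms, of \<theta> k]
  show "dxv (theta_family U w0 P a \<mu> \<theta>) z k
    = (if k < 4 then 2 * Re (\<mu> z * Wv (a z) (exp (\<i> * of_real \<theta>) * a z) k) else 0)"
  proof (cases "k < 4")
    case True
    then have "dx (\<lambda>z. theta_family U w0 P a \<mu> \<theta> z k) z
        = 2 * Re (\<mu> z * Wv (a z) (exp (\<i> * of_real \<theta>) * a z) k)"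
      unfolding theta_family_def
      by (intro DERIV_imp_dx) (rule derivative_eq_intros DERIV_Re_horizontal[OF prim'] refl | simp)+
    with True show ?thesis
      by (simp add: dxv_def)
  qed (simp add: dxv_def theta_family_def dx_def)
qed

lemma dyv_theta_family:
  assumes "open U" "simply_connected U" "w0 \<in> U" "z \<in> U"
    and "a holomorphic_on U" "\<mu> holomorphic_on U"
  shows "dyv (theta_family U w0 P a \<mu> \<theta>) z
    = (\<lambda>k. if k < 4 then - 2 * Im (\<mu> z * Wv (a z) (exp (\<i> * of_real \<theta>) * a z) k) else 0)"
proof
  fix k
  note prim' = prim_has_field_derivative[OF assms, of \<theta> k]
  show "dyv (theta_family U w0 P a \<mu> \<theta>) z k
    = (if k < 4 then - 2 * Im (\<mu> z * Wv (a z) (exp (\<i> * of_real \<theta>) * a z) k) else 0)"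
  proof (cases "k < 4")
    case True
    then have "dy (\<lambda>z. theta_family U w0 P a \<mu> \<theta> z k) z
        = - 2 * Im (\<mu> z * Wv (a z) (exp (\<i> * of_real \<theta>) * a z) k)"
      unfolding theta_family_def
      by (intro DERIV_imp_dy) (rule derivative_eq_intros DERIV_Re_vertical[OF prim'] refl | simp)+
    with True show ?thesis
      by (simp add: dyv_def)
  qed (simp add: dyv_def theta_family_def dy_def)
qed

lemma lor_Re_Wv:
  "lor (\<lambda>k. if k < 4 then 2 * Re (m * Wv x y k) else 0) (\<lambda>k. if k < 4 then 2 * Re (m * Wv x y k) else 0)
   = 4 * ((Re m)\<^sup>2 + (Im m)\<^sup>2) * ((Re x * Re y + Im x * Im y - 1)\<^sup>2 + (Im x * Re y - Re x * Im y)\<^sup>2)"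
  unfolding lor_def Wv_def vec4_def by (simp add: algebra_simps power2_eq_square)

lemma lor_Im_Wv:
  "lor (\<lambda>k. if k < 4 then - 2 * Im (m * Wv x y k) else 0) (\<lambda>k. if k < 4 then - 2 * Im (m * Wv x y k) else 0)
   = 4 * ((Re m)\<^sup>2 + (Im m)\<^sup>2) * ((Re x * Re y + Im x * Im y - 1)\<^sup>2 + (Im x * Re y - Re x * Im y)\<^sup>2)"
  unfolding lor_def Wv_def vec4_def by (simp add: algebra_simps power2_eq_square)

lemma lor_Re_Im_Wv:
  "lor (\<lambda>k. if k < 4 then 2 * Re (m * Wv x y k) else 0) (\<lambda>k. if k < 4 then - 2 * Im (m * Wv x y k) else 0) = 0"
  unfolding lor_def Wv_def vec4_def by (simp add: algebra_simps power2_eq_square)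

definition conformal_factor :: "real \<Rightarrow> (complex \<Rightarrow> complex) \<Rightarrow> (complex \<Rightarrow> complex) \<Rightarrow> complex \<Rightarrow> real" where
  "conformal_factor c \<mu> a z = 4 * sqnorm \<mu> z * (1 - 2 * c * sqnorm a z + (sqnorm a z)\<^sup>2)"

lemma theta_family_first_fundamental_form:
  fixes \<theta> :: real and P :: "nat \<Rightarrow> real"
  assumes "open U" "simply_connected U" "w0 \<in> U" "z \<in> U"
    and "a holomorphic_on U" "\<mu> holomorphic_on U"
  defines "f \<equiv> theta_family U w0 P a \<mu> \<theta>"
  shows "lor (dxv f z) (dxv f z) = conformal_factor (cos \<theta>) \<mu> a z"
    and "lor (dyv f z) (dyv f z) = conformal_factor (cos \<theta>) \<mu> a z"
    and "lor (dxv f z) (dyv f z) = 0"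
proof -
  define e where "e = exp (\<i> * of_real \<theta>)"
  have e: "Re e = cos \<theta>" "(Re e)\<^sup>2 + (Im e)\<^sup>2 = 1"
    unfolding e_def by (simp_all add: Re_exp Im_exp)
  have "(Re x * Re (e * x) + Im x * Im (e * x) - 1)\<^sup>2 + (Im x * Re (e * x) - Re x * Im (e * x))\<^sup>2
      = 1 - 2 * Re e * ((Re x)\<^sup>2 + (Im x)\<^sup>2) + ((Re x)\<^sup>2 + (Im x)\<^sup>2)\<^sup>2" for x
    using e(2) by (simp add: algebra_simps power2_eq_square) algebra
  then show "lor (dxv f z) (dxv f z) = conformal_factor (cos \<theta>) \<mu> a z"
    and "lor (dyv f z) (dyv f z) = conformal_factor (cos \<theta>) \<mu> a z"
    and "lor (dxv f z) (dyv f z) = 0"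
    unfolding f_def dxv_theta_family[OF assms(1-6)] dyv_theta_family[OF assms(1-6)]
      lor_Re_Wv lor_Im_Wv lor_Re_Im_Wv conformal_factor_def sqnorm_def e_def[symmetric] e(1)
    by simp_all
qed

definition conformal_factor_dx :: "real \<Rightarrow> (complex \<Rightarrow> complex) \<Rightarrow> (complex \<Rightarrow> complex) \<Rightarrow> complex \<Rightarrow> real" where
  "conformal_factor_dx c \<mu> a z = 4 * (sqnorm_dx \<mu> z * (1 - 2 * c * sqnorm a z + (sqnorm a z)\<^sup>2)
      + sqnorm \<mu> z * ((2 * sqnorm a z - 2 * c) * sqnorm_dx a z))"

definition conformal_factor_dy :: "real \<Rightarrow> (complex \<Rightarrow> complex) \<Rightarrow> (complex \<Rightarrow> complex) \<Rightarrow> complex \<Rightarrow> real" where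
  "conformal_factor_dy c \<mu> a z = 4 * (sqnorm_dy \<mu> z * (1 - 2 * c * sqnorm a z + (sqnorm a z)\<^sup>2)
      + sqnorm \<mu> z * ((2 * sqnorm a z - 2 * c) * sqnorm_dy a z))"

definition conformal_factor_dxx :: "real \<Rightarrow> (complex \<Rightarrow> complex) \<Rightarrow> (complex \<Rightarrow> complex) \<Rightarrow> complex \<Rightarrow> real" where
  "conformal_factor_dxx c \<mu> a z = 4 * (sqnorm_dxx \<mu> z * (1 - 2 * c * sqnorm a z + (sqnorm a z)\<^sup>2)
      + 2 * sqnorm_dx \<mu> z * ((2 * sqnorm a z - 2 * c) * sqnorm_dx a z)
      + sqnorm \<mu> z * (2 * (sqnorm_dx a z)\<^sup>2 + (2 * sqnorm a z - 2 * c) * sqnorm_dxx a z))"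

definition conformal_factor_dyy :: "real \<Rightarrow> (complex \<Rightarrow> complex) \<Rightarrow> (complex \<Rightarrow> complex) \<Rightarrow> complex \<Rightarrow> real" where
  "conformal_factor_dyy c \<mu> a z = 4 * (sqnorm_dyy \<mu> z * (1 - 2 * c * sqnorm a z + (sqnorm a z)\<^sup>2)
      + 2 * sqnorm_dy \<mu> z * ((2 * sqnorm a z - 2 * c) * sqnorm_dy a z)
      + sqnorm \<mu> z * (2 * (sqnorm_dy a z)\<^sup>2 + (2 * sqnorm a z - 2 * c) * sqnorm_dyy a z))"

context
  fixes \<mu> a :: "complex \<Rightarrow> complex" and U :: "complex set" and z :: complex
  assumes h\<mu>: "\<mu> holomorphic_on U" and ha: "a holomorphic_on U" and oU: "open U" and zU: "z \<in> U"
begin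

lemma DERIV_conformal_factor_horizontal:
  "((\<lambda>t. conformal_factor c \<mu> a (z + of_real t)) has_real_derivative conformal_factor_dx c \<mu> a z) (at 0)"
  unfolding conformal_factor_def conformal_factor_dx_def
  by (rule DERIV_sqnorm_horizontal[OF h\<mu> oU zU] DERIV_sqnorm_horizontal[OF ha oU zU]
        derivative_eq_intros refl | simp)+
     (simp add: algebra_simps power2_eq_square)

lemma DERIV_conformal_factor_vertical:
  "((\<lambda>t. conformal_factor c \<mu> a (z + \<i> * of_real t)) has_real_derivative conformal_factor_dy c \<mu> a z) (at 0)"
  unfolding conformal_factor_def conformal_factor_dy_def
  by (rule DERIV_sqnorm_vertical[OF h\<mu> oU zU] DERIV_sqnorm_vertical[OF ha oU zU]
        derivative_eq_intros refl | simp)+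
     (simp add: algebra_simps power2_eq_square)

lemma DERIV_conformal_factor_dx_horizontal:
  "((\<lambda>t. conformal_factor_dx c \<mu> a (z + of_real t)) has_real_derivative conformal_factor_dxx c \<mu> a z) (at 0)"
  unfolding conformal_factor_dx_def conformal_factor_dxx_def
  by (rule DERIV_sqnorm_horizontal[OF h\<mu> oU zU] DERIV_sqnorm_horizontal[OF ha oU zU]
        DERIV_sqnorm_dx_horizontal[OF h\<mu> oU zU] DERIV_sqnorm_dx_horizontal[OF ha oU zU]
        derivative_eq_intros refl | simp)+
     (simp add: algebra_simps power2_eq_square)

lemma DERIV_conformal_factor_dy_vertical:
  "((\<lambda>t. conformal_factor_dy c \<mu> a (z + \<i> * of_real t)) has_real_derivative conformal_factor_dyy c \<mu> a z) (at 0)"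
  unfolding conformal_factor_dy_def conformal_factor_dyy_def
  by (rule DERIV_sqnorm_vertical[OF h\<mu> oU zU] DERIV_sqnorm_vertical[OF ha oU zU]
        DERIV_sqnorm_dy_vertical[OF h\<mu> oU zU] DERIV_sqnorm_dy_vertical[OF ha oU zU]
        derivative_eq_intros refl | simp)+
     (simp add: algebra_simps power2_eq_square)

end

text \<open>The contribution of \<mu> cancels except for the factor |\<mu>|^4 because log |\<mu>|^2 is
  harmonic, which is what the two sqnorm identities for \<mu> express.\<close>

lemma conformal_factor_curvature_identity:
  "conformal_factor c \<mu> a z * (conformal_factor_dxx c \<mu> a z + conformal_factor_dyy c \<mu> a z)
     - (conformal_factor_dx c \<mu> a z)\<^sup>2 - (conformal_factor_dy c \<mu> a z)\<^sup>2
   = 128 * (sqnorm \<mu> z)\<^sup>2 * sqnorm (deriv a) z * (2 * sqnorm a z - c - c * (sqnorm a z)\<^sup>2)"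
  using sqnorm_laplacian[of \<mu> z] sqnorm_gradient[of \<mu> z] sqnorm_laplacian[of a z] sqnorm_gradient[of a z]
  unfolding conformal_factor_def conformal_factor_dx_def conformal_factor_dy_def
    conformal_factor_dxx_def conformal_factor_dyy_def
  by algebra

lemma gauss_curvature_theta_family:
  assumes U: "open U" "simply_connected U" "w0 \<in> U" "w \<in> U"
    and ha: "a holomorphic_on U" and h\<mu>: "\<mu> holomorphic_on U"
  shows "gauss_curvature (theta_family U w0 P a \<mu> \<theta>) w
    = - (cmod (deriv a w))\<^sup>2 * (2 * (cmod (a w))\<^sup>2 - cos \<theta> - cos \<theta> * ((cmod (a w))\<^sup>2)\<^sup>2)
      / ((cmod (\<mu> w))\<^sup>2 * (1 - 2 * cos \<theta> * (cmod (a w))\<^sup>2 + ((cmod (a w))\<^sup>2)\<^sup>2) ^ 3)"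
proof -
  let ?m = "sqnorm \<mu> w" and ?u = "sqnorm a w" and ?A = "sqnorm (deriv a) w" and ?c = "cos \<theta>"
  let ?\<Lambda> = "conformal_factor ?c \<mu> a"
  have "gauss_curvature (theta_family U w0 P a \<mu> \<theta>) w
      = - (?\<Lambda> w * (conformal_factor_dxx ?c \<mu> a w + conformal_factor_dyy ?c \<mu> a w)
           - (conformal_factor_dx ?c \<mu> a w)\<^sup>2 - (conformal_factor_dy ?c \<mu> a w)\<^sup>2) / (2 * (?\<Lambda> w) ^ 3)"
    by (rule gauss_curvature_conformal[OF U(1,4)])
       (use theta_family_first_fundamental_form[OF U(1-3) _ ha h\<mu>]
          DERIV_conformal_factor_horizontal[OF h\<mu> ha U(1)] DERIV_conformal_factor_vertical[OF h\<mu> ha U(1)]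
          DERIV_conformal_factor_dx_horizontal[OF h\<mu> ha U(1,4)]
          DERIV_conformal_factor_dy_vertical[OF h\<mu> ha U(1,4)] in simp_all)
  also have "\<dots> = - (128 * ?m\<^sup>2 * ?A * (2 * ?u - ?c - ?c * ?u\<^sup>2)) / (2 * (?\<Lambda> w) ^ 3)"
    by (simp only: conformal_factor_curvature_identity)
  also have "\<dots> = - ?A * (2 * ?u - ?c - ?c * ?u\<^sup>2) / (?m * (1 - 2 * ?c * ?u + ?u\<^sup>2) ^ 3)"
  proof -
    have "- (128 * m\<^sup>2 * A * p) / (2 * (4 * m * \<phi>) ^ 3) = - A * p / (m * \<phi> ^ 3)" for m A p \<phi> :: real
      by (cases "m * \<phi> = 0") (auto simp: field_simps power3_eq_cube power2_eq_square)
    then show ?thesis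
      unfolding conformal_factor_def .
  qed
  finally show ?thesis
    by (simp add: sqnorm_eq_cmod_power2)
qed

lemma cos_quadratic_pos:
  fixes u \<theta> :: real
  assumes "\<bar>u\<bar> \<noteq> 1"
  shows "1 - 2 * cos \<theta> * u + u\<^sup>2 > 0"
proof -
  have sum_sq: "1 - 2 * cos \<theta> * u + u\<^sup>2 = (u - cos \<theta>)\<^sup>2 + (sin \<theta>)\<^sup>2"
    using sin_cos_squared_add[of \<theta>] by (simp add: power2_eq_square algebra_simps)
  have "(u - cos \<theta>)\<^sup>2 + (sin \<theta>)\<^sup>2 \<noteq> 0"
  proof
    assume "(u - cos \<theta>)\<^sup>2 + (sin \<theta>)\<^sup>2 = 0"
    then have "u = cos \<theta>" "sin \<theta> = 0"
      by (simp_all add: add_nonneg_eq_0_iff)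
    with sin_cos_squared_add[of \<theta>] assms show False
      by (simp add: power2_eq_1_iff abs_if split: if_splits)
  qed
  then show ?thesis
    unfolding sum_sq by (simp add: add_pos_nonneg order_le_neq_trans)
qed

lemma gauss_curvature_theta_family_eq_0_iff:
  assumes "open U" "simply_connected U" "w0 \<in> U" "w \<in> U"
    and "a holomorphic_on U" "\<mu> holomorphic_on U"
    and "\<mu> w \<noteq> 0" and "cmod (a w) \<noteq> 1"
  shows "gauss_curvature (theta_family U w0 P a \<mu> \<theta>) w = 0
    \<longleftrightarrow> deriv a w = 0 \<or> 2 * (cmod (a w))\<^sup>2 - cos \<theta> - cos \<theta> * ((cmod (a w))\<^sup>2)\<^sup>2 = 0"
proof -
  have "\<bar>(cmod (a w))\<^sup>2\<bar> \<noteq> 1"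
    using assms(8) by (simp add: power2_eq_1_iff) (use norm_ge_zero[of "a w"] in linarith)
  then have "1 - 2 * cos \<theta> * (cmod (a w))\<^sup>2 + ((cmod (a w))\<^sup>2)\<^sup>2 > 0"
    by (rule cos_quadratic_pos)
  with assms(7) show ?thesis
    by (simp add: gauss_curvature_theta_family[OF assms(1-6)])
qed

lemma finite_roots_even_quartic: "finite {s::real. 2 * s\<^sup>2 - c - c * (s\<^sup>2)\<^sup>2 = 0}"
proof -
  have "{s::real. 2 * s\<^sup>2 - c - c * (s\<^sup>2)\<^sup>2 = 0} = {s. poly [:- c, 0, 2, 0, - c:] s = 0}"
    by (simp add: algebra_simps power2_eq_square)
  moreover have "[:- c, 0, 2, 0, - c:] \<noteq> 0"
    by simp
  ultimately show ?thesis
    using poly_roots_finite by metis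
qed

lemma constant_on_iff_deriv_eq_0:
  assumes U: "open U" "connected U" and hf: "f holomorphic_on U"
  shows "f constant_on U \<longleftrightarrow> (\<forall>w\<in>U. deriv f w = 0)"
proof
  assume "f constant_on U"
  then obtain C where C: "\<And>z. z \<in> U \<Longrightarrow> f z = C"
    by (auto simp: constant_on_def)
  show "\<forall>w\<in>U. deriv f w = 0"
  proof
    fix w assume "w \<in> U"
    have "(f has_field_derivative 0) (at w)"
      by (rule has_field_derivative_transform_within_open[OF DERIV_const U(1) \<open>w \<in> U\<close>]) (simp add: C)
    then show "deriv f w = 0"
      by (rule DERIV_imp_deriv)
  qed
next
  assume "\<forall>w\<in>U. deriv f w = 0"
  then show "f constant_on U"
    by (intro has_field_derivative_0_imp_constant_on[OF _ U(2,1)]) (metis hf U(1) holomorphic_derivI)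
qed

lemma ball_subset_image_deriv_nonzero:
  assumes U: "open U" and hf: "f holomorphic_on U" and w: "w \<in> U" "deriv f w \<noteq> 0"
  obtains \<rho> where "\<rho> > 0" "ball (f w) \<rho> \<subseteq> f ` {z \<in> U. deriv f z \<noteq> 0}"
proof -
  have "continuous_on U (deriv f)"
    using holomorphic_deriv[OF hf U] holomorphic_on_imp_continuous_on by blast
  then have "open (U \<inter> deriv f -` (- {0}))"
    using U by (rule continuous_open_preimage) auto
  moreover have "w \<in> U \<inter> deriv f -` (- {0})"
    using w by simp
  ultimately obtain r where r: "r > 0" "ball w r \<subseteq> U \<inter> deriv f -` (- {0})"
    by (rule openE)
  then have hf_ball: "f holomorphic_on ball w r"
    using holomorphic_on_subset[OF hf] by blast
  have "\<not> f constant_on ball w r"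
  proof
    assume "f constant_on ball w r"
    with r(1) have "deriv f w = 0"
      using constant_on_iff_deriv_eq_0[OF open_ball connected_ball hf_ball] by simp
    with w(2) show False
      by contradiction
  qed
  then have "open (f ` ball w r)"
    by (rule open_mapping_thm[OF hf_ball open_ball connected_ball open_ball order.refl])
  moreover have "f w \<in> f ` ball w r"
    using r(1) by simp
  ultimately obtain \<rho> where "\<rho> > 0" "ball (f w) \<rho> \<subseteq> f ` ball w r"
    by (rule openE)
  moreover have "f ` ball w r \<subseteq> f ` {z \<in> U. deriv f z \<noteq> 0}"
    using r(2) by blast
  ultimately show ?thesis
    using that by blast
qed

lemma infinite_norm_image_ball:
  fixes c :: complex
  assumes "\<rho> > 0"
  shows "infinite (cmod ` ball c \<rho>)"
proof
  assume "finite (cmod ` ball c \<rho>)"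
  moreover have "connected (cmod ` ball c \<rho>)"
    by (rule connected_continuous_image[OF continuous_on_norm_id connected_ball])
  ultimately obtain x where x: "cmod ` ball c \<rho> \<subseteq> {x}"
    by (metis connected_finite_iff_sing order.refl empty_subsetI)
  define d where "d = (if c = 0 then 1 else sgn c)"
  have d: "cmod d = 1" "c = of_real (cmod c) * d"
    by (auto simp: d_def sgn_eq norm_divide)
  define z where "z = of_real (cmod c + \<rho> / 2) * d"
  have "z - c = of_real (\<rho> / 2) * d"
    by (subst d(2)) (simp add: z_def algebra_simps)
  then have "dist c z = \<rho> / 2"
    using assms d(1) by (simp only: dist_norm norm_minus_commute[of c] norm_mult) simp
  then have "z \<in> ball c \<rho>" "c \<in> ball c \<rho>"
    using assms by simp_all
  then have "cmod z = x" "cmod c = x"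
    using x by blast+
  moreover have "cmod z = cmod c + \<rho> / 2"
    using assms unfolding z_def norm_mult norm_of_real d(1) by simp
  ultimately show False
    using assms by simp
qed

lemma constant_on_if_deriv_nonzero_only_at_finitely_many_moduli:
  fixes f :: "complex \<Rightarrow> complex"
  assumes U: "open U" "connected U" and hf: "f holomorphic_on U" and S: "finite S"
    and moduli: "\<And>w. w \<in> U \<Longrightarrow> deriv f w \<noteq> 0 \<Longrightarrow> cmod (f w) \<in> S"
  shows "f constant_on U"
proof (rule ccontr)
  assume "\<not> f constant_on U"
  then obtain w where "w \<in> U" "deriv f w \<noteq> 0"
    using constant_on_iff_deriv_eq_0[OF U hf] by blast
  then obtain \<rho> where \<rho>: "\<rho> > 0" "ball (f w) \<rho> \<subseteq> f ` {z \<in> U. deriv f z \<noteq> 0}"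
    by (rule ball_subset_image_deriv_nonzero[OF U(1) hf])
  have "cmod ` ball (f w) \<rho> \<subseteq> S"
  proof
    fix t assume "t \<in> cmod ` ball (f w) \<rho>"
    with \<rho>(2) obtain z where "z \<in> U" "deriv f z \<noteq> 0" "t = cmod (f z)"
      by blast
    then show "t \<in> S"
      using moduli by blast
  qed
  with S infinite_norm_image_ball[OF \<rho>(1)] show False
    using finite_subset by blast
qed

lemma theta_family_flat_iff_constant:
  assumes U: "open U" "connected U" "simply_connected U" "w0 \<in> U"
    and ha: "a holomorphic_on U" and h\<mu>: "\<mu> holomorphic_on U"
    and \<mu>: "\<forall>w\<in>U. \<mu> w \<noteq> 0" and a: "\<forall>w\<in>U. cmod (a w) \<noteq> 1"
  shows "(\<forall>w\<in>U. gauss_curvature (theta_family U w0 P a \<mu> \<theta>) w = 0) \<longleftrightarrow> a constant_on U"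
proof -
  have K_eq_0_iff: "gauss_curvature (theta_family U w0 P a \<mu> \<theta>) w = 0
      \<longleftrightarrow> deriv a w = 0 \<or> cmod (a w) \<in> {s. 2 * s\<^sup>2 - cos \<theta> - cos \<theta> * (s\<^sup>2)\<^sup>2 = 0}"
    if "w \<in> U" for w
    using gauss_curvature_theta_family_eq_0_iff[OF U(1,3,4) that ha h\<mu>] \<mu> a that by simp
  show ?thesis
  proof
    assume flat: "\<forall>w\<in>U. gauss_curvature (theta_family U w0 P a \<mu> \<theta>) w = 0"
    show "a constant_on U"
    proof (rule constant_on_if_deriv_nonzero_only_at_finitely_many_moduli[OF U(1,2) ha
          finite_roots_even_quartic[of "cos \<theta>"]])
      fix w assume "w \<in> U" "deriv a w \<noteq> 0"
      with flat K_eq_0_iff[of w]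
      show "cmod (a w) \<in> {s. 2 * s\<^sup>2 - cos \<theta> - cos \<theta> * (s\<^sup>2)\<^sup>2 = 0}"
        by simp
    qed
  next
    assume "a constant_on U"
    then have "\<forall>w\<in>U. deriv a w = 0"
      using constant_on_iff_deriv_eq_0[OF U(1,2) ha] by simp
    with K_eq_0_iff show "\<forall>w\<in>U. gauss_curvature (theta_family U w0 P a \<mu> \<theta>) w = 0"
      by simp
  qed
qed

lemma L3_in_light_cone: "L3 z \<in> light_cone"
  unfolding light_cone_def L3_def vec4_def lor_def
  by (simp add: algebra_simps power2_eq_square) (rule exI[of _ 0], simp add: add_nonneg_eq_0_iff)

lemma L0_in_light_cone: "L0 z \<in> light_cone"
  unfolding light_cone_def L0_def vec4_def lor_def
  by (simp add: algebra_simps power2_eq_square) (rule exI[of _ 0], simp add: add_nonneg_eq_0_iff)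

lemma inj_L3: "inj L3"
proof
  fix z y assume "L3 z = L3 y"
  then have "L3 z 1 = L3 y 1" "L3 z 2 = L3 y 2"
    by simp_all
  then show "z = y"
    unfolding L3_def vec4_def by (simp add: complex_eq_iff)
qed

lemma normal_maps_constant_iff:
  "(\<forall>\<theta>::real. (\<exists>c\<in>light_cone. \<forall>w\<in>U. L3 (a w) = c)
             \<and> (\<exists>c\<in>light_cone. \<forall>w\<in>U. L0 (exp (\<i> * of_real \<theta>) * a w) = c))
   \<longleftrightarrow> a constant_on U"
proof
  assume "\<forall>\<theta>::real. (\<exists>c\<in>light_cone. \<forall>w\<in>U. L3 (a w) = c)
             \<and> (\<exists>c\<in>light_cone. \<forall>w\<in>U. L0 (exp (\<i> * of_real \<theta>) * a w) = c)"
  then obtain c where c: "\<forall>w\<in>U. L3 (a w) = c"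
    by blast
  show "a constant_on U"
  proof (cases "U = {}")
    case False
    then obtain w1 where "w1 \<in> U"
      by blast
    have "a w = a w1" if "w \<in> U" for w
      using c that \<open>w1 \<in> U\<close> by (intro injD[OF inj_L3]) simp
    then show ?thesis
      unfolding constant_on_def by blast
  qed (simp add: constant_on_def)
next
  assume "a constant_on U"
  then obtain C where "\<forall>w\<in>U. a w = C"
    unfolding constant_on_def by blast
  then show "\<forall>\<theta>::real. (\<exists>c\<in>light_cone. \<forall>w\<in>U. L3 (a w) = c)
             \<and> (\<exists>c\<in>light_cone. \<forall>w\<in>U. L0 (exp (\<i> * of_real \<theta>) * a w) = c)"
    using L3_in_light_cone L0_in_light_cone by auto
qed

theorem mainTheorem11:
  fixes U :: "complex set" and a \<mu> :: "complex \<Rightarrow> complex"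
    and w0 :: complex and P :: "nat \<Rightarrow> real"
  assumes "open U" and "connected U" and "simply_connected U"
    and "w0 \<in> U"
    and "a holomorphic_on U" and "\<mu> holomorphic_on U"
    and "\<forall>w\<in>U. \<mu> w \<noteq> 0" and "\<forall>w\<in>U. cmod (a w) \<noteq> 1"
  shows
   "((\<exists>\<theta>0::real. \<forall>w\<in>U. gauss_curvature (theta_family U w0 P a \<mu> \<theta>0) w = 0)
       \<longleftrightarrow> (\<exists>c. \<forall>w\<in>U. a w = c))
  \<and> ((\<exists>c. \<forall>w\<in>U. a w = c)
       \<longleftrightarrow> (\<forall>\<theta>::real. (\<exists>c\<in>light_cone. \<forall>w\<in>U. L3 (a w) = c)
                    \<and> (\<exists>c\<in>light_cone. \<forall>w\<in>U. L0 (exp (\<i> * of_real \<theta>) * a w) = c)))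
  \<and> ((\<exists>c. \<forall>w\<in>U. a w = c)
       \<longleftrightarrow> (\<forall>\<theta>::real. planar_points (theta_family U w0 P a \<mu> \<theta>) U = U))"
proof -
  have planar_iff: "planar_points f U = U \<longleftrightarrow> (\<forall>w\<in>U. gauss_curvature f w = 0)" for f
    by (auto simp: planar_points_def)
  show ?thesis
    unfolding planar_iff theta_family_flat_iff_constant[OF assms] normal_maps_constant_iff
      constant_on_def[symmetric]
    by blast
qed

end
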